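(* Let $\mathcal{C}=(V,\mathcal{R})$ be a coherent configuration with fibers $X,Y$ such that $m=|X|=|Y|$ is a prime, $|\mathcal{R}_X|>2$ and $|\mathcal{R}_{X,Y}|>1$. If $S,T\in\mathcal{R}_{X,Y}$ and $R\in\mathcal{R}$ satisfy $ST^t=\{R\}$, then $c_{RR^t}^{R_1}\ge d_T$ for each $R_1\in SS^t$, and $c_{R^tR}^{R_2}\ge d_S$ for each $R_2\in TT^t$.
   Context: A coherent configuration is a pair $\mathcal{C}=(V,\mathcal{R})$ where $V$ is a finite set and $\mathcal{R}$ is a partition of $V\times V$ into nonempty sets such that: (1) the diagonal $\Delta_V$ is a union of members of $\mathcal{R}$; (2) for each $R\in\mathcal{R}$ its transpose $R^t=\{(u,v)\mid (v,u)\in R\}$ belongs to $\mathcal{R}$; (3) for all $R,S,T\in\mathcal{R}$ there is a constant $c_{RS}^T$ with $c_{RS}^T=|R(u)\cap S^t(v)|$ for all $(u,v)\in T$, where $T(w)=\{z\in V\mid (w,z)\in T\}$. A subset $X\subseteq V$ is a fiber if $\Delta_X\in\mathcal{R}$. For fibers $X,Y$, $\mathcal{R}_{X,Y}=\{R\in\mathcal{R}\mid R\subseteq X\times Y\}$, $\mathcal{R}_X=\mathcal{R}_{X,X}$, and for $R\in\mathcal{R}_{X,Y}$, $d_R=c_{RR^t}^{\Delta_X}=|R(x)|$ for any $x\in X$. Complex product: for $A,B\in\mathcal{R}$, $AB=\{R\in\mathcal{R}\mid c_{AB}^R>0\}$. *)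

theory Defs
  imports "HOL-Computational_Algebra.Primes"
begin

definition coherent_configuration :: "'a set \<Rightarrow> ('a \<times> 'a) set set \<Rightarrow> bool" where
  "coherent_configuration V Rel \<longleftrightarrow>
     finite V \<and>
     (\<forall>S\<in>Rel. S \<noteq> {}) \<and>
     \<Union>Rel = V \<times> V \<and>
     (\<forall>S\<in>Rel. \<forall>T\<in>Rel. S \<noteq> T \<longrightarrow> S \<inter> T = {}) \<and>
     (\<exists>D\<subseteq>Rel. \<Union>D = Id_on V) \<and>
     (\<forall>S\<in>Rel. converse S \<in> Rel) \<and>
     (\<forall>S\<in>Rel. \<forall>T\<in>Rel. \<forall>U\<in>Rel. \<exists>c::nat. \<forall>(u,v)\<in>U.
         card (S `` {u} \<inter> (converse T) `` {v}) = c)"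

(* intersection number c_{S T}^U = |S(u) \<inter> T^t(v)| for (u,v) \<in> U (well defined by coherence) *)
definition cnum :: "('a \<times> 'a) set \<Rightarrow> ('a \<times> 'a) set \<Rightarrow> ('a \<times> 'a) set \<Rightarrow> nat" where
  "cnum S T U = (let p = (SOME p. p \<in> U) in card (S `` {fst p} \<inter> (converse T) `` {snd p}))"

definition fiber :: "('a \<times> 'a) set set \<Rightarrow> 'a set \<Rightarrow> bool" where
  "fiber Rel X \<longleftrightarrow> Id_on X \<in> Rel"

definition rels :: "('a \<times> 'a) set set \<Rightarrow> 'a set \<Rightarrow> 'a set \<Rightarrow> ('a \<times> 'a) set set" where
  "rels Rel X Y = {S \<in> Rel. S \<subseteq> X \<times> Y}"

definition deg :: "('a \<times> 'a) set \<Rightarrow> 'a set \<Rightarrow> nat" where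
  "deg S X = cnum S (converse S) (Id_on X)"

definition cprod :: "('a \<times> 'a) set set \<Rightarrow> ('a \<times> 'a) set \<Rightarrow> ('a \<times> 'a) set \<Rightarrow> ('a \<times> 'a) set set" where
  "cprod Rel A B = {U \<in> Rel. cnum A B U > 0}"

end

theory Submission
  imports Defs
begin

text \<open>Because \<open>S T\<^sup>t = {R}\<close>, two points of \<open>X\<close> with a common neighbour \<open>z\<close>, the first via \<open>S\<close> and
  the second via \<open>T\<close>, are \<open>R\<close>-related. So if \<open>(a, b) \<in> R1 \<in> S S\<^sup>t\<close> and \<open>z\<close> is a common
  \<open>S\<close>-neighbour of \<open>a\<close> and \<open>b\<close>, all \<open>T\<^sup>t\<close>-neighbours of \<open>z\<close> are common \<open>R\<close>-neighbours of
  \<open>a\<close> and \<open>b\<close>; by double counting with \<open>|X| = |Y|\<close> there are \<open>d_T\<close> of them. The second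
  inequality is the first one for \<open>T, S, R\<^sup>t\<close>.\<close>

lemma card_eq_card_mult_if_regular:
  assumes "finite X" "finite Y" "A \<subseteq> X \<times> Y" "\<And>x. x \<in> X \<Longrightarrow> card (A `` {x}) = d"
  shows "card A = card X * d"
proof -
  have "A = Sigma X (\<lambda>x. A `` {x})" using assms(3) by auto
  then have "card A = (\<Sum>x\<in>X. card (A `` {x}))"
    using assms by (metis card_SigmaI finite_Image finite_SigmaI finite_subset)
  also have "\<dots> = card X * d" using assms(4) by simp
  finally show ?thesis .
qed

context
  fixes V :: "'a set" and Rel :: "('a \<times> 'a) set set"
  assumes cc: "coherent_configuration V Rel"
begin

lemma finite_carrier: "finite V"
  using cc by (simp add: coherent_configuration_def)

lemma Union_rel: "\<Union>Rel = V \<times> V"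
  using cc by (simp add: coherent_configuration_def)

lemma rel_nonempty: "A \<in> Rel \<Longrightarrow> A \<noteq> {}"
  using cc by (simp add: coherent_configuration_def)

lemma converse_in_rel: "A \<in> Rel \<Longrightarrow> converse A \<in> Rel"
  using cc by (simp add: coherent_configuration_def)

lemma rel_subset_carrier: "A \<in> Rel \<Longrightarrow> A \<subseteq> V \<times> V"
  using Union_rel by (metis Union_upper)

lemma finite_Image_rel: "A \<in> Rel \<Longrightarrow> finite (A `` {u})"
  using rel_subset_carrier finite_carrier
  by (meson finite_Image finite_SigmaI finite_subset)

lemma fiber_subset_carrier: "fiber Rel X \<Longrightarrow> X \<subseteq> V"
  unfolding fiber_def using rel_subset_carrier by blast

lemma cnum_eq_card:
  assumes "A \<in> Rel" "B \<in> Rel" "U \<in> Rel" "(u, v) \<in> U"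
  shows "cnum A B U = card (A `` {u} \<inter> converse B `` {v})"
proof -
  have "\<forall>S\<in>Rel. \<forall>T\<in>Rel. \<forall>U\<in>Rel. \<exists>c::nat. \<forall>(u, v)\<in>U.
      card (S `` {u} \<inter> converse T `` {v}) = c"
    using cc by (simp add: coherent_configuration_def)
  then obtain c where c: "\<forall>(u, v)\<in>U. card (A `` {u} \<inter> converse B `` {v}) = c"
    using assms(1-3) by blast
  have "(SOME p. p \<in> U) \<in> U" using assms(4) by (rule someI)
  then show ?thesis
    using c assms(4) unfolding cnum_def Let_def by (auto split: prod.splits)
qed

lemma card_le_cnum:
  assumes "A \<in> Rel" "B \<in> Rel" "U \<in> Rel" "(u, v) \<in> U"
    and "Z \<subseteq> A `` {u} \<inter> converse B `` {v}"
  shows "card Z \<le> cnum A B U"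
  unfolding cnum_eq_card[OF assms(1-4)]
  using assms(5) finite_Image_rel[OF assms(1)] by (intro card_mono) auto

lemma common_neighbour_if_in_cprod:
  assumes "A \<in> Rel" "B \<in> Rel" "U \<in> cprod Rel A B" "(u, v) \<in> U"
  obtains z where "(u, z) \<in> A" "(z, v) \<in> B"
proof -
  have "card (A `` {u} \<inter> converse B `` {v}) > 0"
    using assms cnum_eq_card[OF assms(1,2)] unfolding cprod_def by auto
  then show ?thesis using that by (auto simp: card_gt_0_iff)
qed

lemma relcomp_subset_Union_cprod:
  assumes "A \<in> Rel" "B \<in> Rel"
  shows "A O B \<subseteq> \<Union>(cprod Rel A B)"
proof
  fix p assume "p \<in> A O B"
  then obtain u z v where p: "p = (u, v)" "(u, z) \<in> A" "(z, v) \<in> B" by blast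
  then have "p \<in> V \<times> V" using assms rel_subset_carrier by blast
  then obtain U where U: "U \<in> Rel" "p \<in> U"
    using Union_rel by blast
  have "z \<in> A `` {u} \<inter> converse B `` {v}" using p by auto
  then have "card {z} \<le> cnum A B U"
    using p U by (intro card_le_cnum assms) auto
  then show "p \<in> \<Union>(cprod Rel A B)" using U unfolding cprod_def by auto
qed

lemma deg_eq_card_Image:
  assumes "A \<in> Rel" "fiber Rel X" "x \<in> X"
  shows "deg A X = card (A `` {x})"
  using cnum_eq_card[OF assms(1) converse_in_rel[OF assms(1)], of "Id_on X" x x] assms(2,3)
  unfolding deg_def fiber_def by auto

lemma deg_converse:
  assumes "fiber Rel X" "fiber Rel Y" "card X = card Y" "card X > 0" "A \<in> rels Rel X Y"
  shows "deg (converse A) Y = deg A X"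
proof -
  have A: "A \<in> Rel" "A \<subseteq> X \<times> Y" using assms(5) unfolding rels_def by auto
  have fin: "finite X" "finite Y"
    using assms(1,2) fiber_subset_carrier finite_carrier finite_subset by blast+
  have "card A = card X * deg A X"
    using A fin deg_eq_card_Image[OF A(1) assms(1)]
    by (intro card_eq_card_mult_if_regular) auto
  moreover have "card (converse A) = card Y * deg (converse A) Y"
    using A fin deg_eq_card_Image[OF converse_in_rel[OF A(1)] assms(2)]
    by (intro card_eq_card_mult_if_regular) auto
  ultimately show ?thesis using assms(3,4) by (simp add: card_inverse)
qed

lemma deg_le_cnum_if_relcomp_subset:
  assumes "fiber Rel X" "fiber Rel Y" "card X = card Y" "card X > 0"
    and S: "S \<in> rels Rel X Y" and T: "T \<in> rels Rel X Y" and R: "R \<in> Rel"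
    and STR: "S O converse T \<subseteq> R" and U: "U \<in> cprod Rel S (converse S)"
  shows "deg T X \<le> cnum R (converse R) U"
proof -
  have "S \<in> Rel" "T \<in> Rel" "S \<subseteq> X \<times> Y" using S T unfolding rels_def by auto
  have "U \<in> Rel" using U unfolding cprod_def by auto
  then obtain a b where ab: "(a, b) \<in> U"
    using rel_nonempty by fast
  then obtain z where z: "(a, z) \<in> S" "(b, z) \<in> S"
    using common_neighbour_if_in_cprod \<open>S \<in> Rel\<close> converse_in_rel U by blast
  have "deg T X = card (converse T `` {z})"
    using deg_converse[OF assms(1-4) T] deg_eq_card_Image[OF converse_in_rel assms(2)]
      \<open>T \<in> Rel\<close> \<open>S \<subseteq> X \<times> Y\<close> z by auto
  also have "\<dots> \<le> cnum R (converse R) U"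
    using STR z by (intro card_le_cnum[OF R converse_in_rel[OF R] \<open>U \<in> Rel\<close> ab]) auto
  finally show ?thesis .
qed

end

theorem lemma3p6:
  fixes V :: "'a set" and Rel :: "('a \<times> 'a) set set"
    and X Y :: "'a set" and S T R :: "('a \<times> 'a) set"
  assumes "coherent_configuration V Rel"
    and "fiber Rel X" and "fiber Rel Y"
    and "card X = card Y" and "prime (card X)"
    and "card (rels Rel X X) > 2" and "card (rels Rel X Y) > 1"
    and "S \<in> rels Rel X Y" and "T \<in> rels Rel X Y" and "R \<in> Rel"
    and "cprod Rel S (converse T) = {R}"
  shows "(\<forall>R1\<in>cprod Rel S (converse S). cnum R (converse R) R1 \<ge> deg T X)
       \<and> (\<forall>R2\<in>cprod Rel T (converse T). cnum (converse R) R R2 \<ge> deg S X)"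
proof -
  note cc = assms(1)
  have "card X > 0" using assms(5) prime_gt_0_nat by blast
  have "S \<in> Rel" "T \<in> Rel" using assms(8,9) unfolding rels_def by auto
  have "S O converse T \<subseteq> R"
    using relcomp_subset_Union_cprod[OF cc \<open>S \<in> Rel\<close> converse_in_rel[OF cc \<open>T \<in> Rel\<close>]]
    unfolding assms(11) by simp
  then have "T O converse S \<subseteq> converse R" by blast
  note main = deg_le_cnum_if_relcomp_subset[OF cc assms(2-4) \<open>card X > 0\<close>]
  show ?thesis
    using main[OF assms(8-10) \<open>S O converse T \<subseteq> R\<close>]
      main[OF assms(9,8) converse_in_rel[OF cc assms(10)] \<open>T O converse S \<subseteq> converse R\<close>]
    by simp
qed

end
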